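(* Let $V=\{1,\dots,n\}$, let $(\bar\Omega,\mathcal F,\mathbb P)$ be a probability space, and let $\sigma:\{0,1\}^n\times\bar\Omega\to\mathbb R$ be such that for every $\omega$ the function $x\mapsto\sigma(x,\omega)$ on $\{0,1\}^n$ (viewed as a set function on $V$) is nondecreasing and submodular, and each $\sigma(x)$ is integrable. Let $\mathcal X\subseteq\{0,1\}^n$ be nonempty and $\alpha\in(0,1]$. Consider the following delayed constraint generation algorithm for $\max_{x\in\mathcal X}\mathrm{CVaR}_\alpha(\sigma(x))$, with tolerance $\epsilon=0$: start with a finite set $\mathcal C$ of optimality cuts, $\mathrm{UB}=\infty$, $\mathrm{LB}=-\infty$; while $\mathrm{UB}-\mathrm{LB}>\epsilon$: solve the relaxed master problem $\max\{\psi:(x,\psi)\text{ satisfies all cuts in }\mathcal C,\ x\in\mathcal X,\ \psi\in\mathbb R\}$ to optimality, obtaining $(\bar\psi,\bar x)$; set $\mathrm{UB}=\bar\psi$ and $\mathrm{LB}=\mathrm{CVaR}_\alpha(\sigma(\bar x))$; add to $\mathcal C$ the cut (A) and/or the cut (B) generated at $\bar x$, where, with $\bar X$ the support of $\bar x$, (A): $\psi\le\mathrm{CVaR}_\alpha(\sigma(\bar x))+\sum_{j\in V\setminus\bar X}(\mathrm{CVaR}_1(\sigma(\bar x+\mathbf e_j))-\mathrm{CVaR}_\alpha(\sigma(\bar x)))x_j$; (B): $\psi\le\mathrm{CVaR}_\alpha(\sigma(\bar x))+\sum_{i=1}^r\bar\delta_{j_i}(\bar x)x_{j_i}$, for some ordering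 $j_1,\dots,j_r$ of $V\setminus\bar X$, $\bar\delta_{j_i}(\bar x)=\mathrm{CVaR}_\alpha(\sigma(\mathbf 1-\sum_{l=i+1}^r\mathbf e_{j_l}))-\mathrm{CVaR}_\alpha(\sigma(\bar x))$; upon termination output $\bar x$. Then this algorithm terminates after finitely many iterations and outputs an optimal solution of $\max_{x\in\mathcal X}\mathrm{CVaR}_\alpha(\sigma(x))$.
   Context: $\mathrm{CVaR}_\alpha(Y)=\max_{\eta\in\mathbb R}\{\eta-\frac1\alpha\mathbb E([\eta-Y]_+)\}$ for integrable $Y$ and $\alpha\in(0,1]$, with $[z]_+=\max(z,0)$. $\mathbf e_j$ is the $j$-th unit vector and $\mathbf 1$ the all-ones vector in $\mathbb R^n$. It is assumed that $\mathrm{CVaR}_\alpha(\sigma(x))$ can be evaluated exactly for any given $x$ (a CVaR oracle), and that each relaxed master problem is solved to optimality. *)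

theory Defs
  imports "HOL-Probability.Probability"
begin

text \<open>Points of the ground set V are the elements of the finite index type 'n
  (so n = CARD('n)); vectors in R^n are elements of real^'n.\<close>

definition binvecs :: "(real^'n) set" where
  "binvecs = {x. \<forall>i. x $ i = 0 \<or> x $ i = 1}"

definition indvec :: "'n set \<Rightarrow> real^'n" where
  "indvec S = (\<chi> i. if i \<in> S then 1 else 0)"

definition supp :: "real^'n \<Rightarrow> 'n set" where
  "supp x = {j. x $ j \<noteq> 0}"

definition unitv :: "'n \<Rightarrow> real^'n" where
  "unitv j = axis j 1"

definition onesv :: "real^'n" where
  "onesv = (\<chi> i. 1)"

definition nondecr_setfun :: "('n set \<Rightarrow> real) \<Rightarrow> bool" where
  "nondecr_setfun f \<longleftrightarrow> (\<forall>S T. S \<subseteq> T \<longrightarrow> f S \<le> f T)"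

definition submodular_setfun :: "('n set \<Rightarrow> real) \<Rightarrow> bool" where
  "submodular_setfun f \<longleftrightarrow> (\<forall>S T. f (S \<union> T) + f (S \<inter> T) \<le> f S + f T)"

text \<open>CVaR_alpha(Y) = max over eta of eta - (1/alpha) E[(eta - Y)_+]; the maximum is
  attained, so it equals the supremum.\<close>
definition cvar :: "'a measure \<Rightarrow> real \<Rightarrow> ('a \<Rightarrow> real) \<Rightarrow> real" where
  "cvar M \<alpha> Y = (SUP \<eta>::real. \<eta> - (1 / \<alpha>) * integral\<^sup>L M (\<lambda>\<omega>. max (\<eta> - Y \<omega>) 0))"

text \<open>A cut (a, b) stands for the linear inequality  psi \<le> a + sum_j b_j x_j.\<close>
type_synonym 'n cut = "real \<times> (real^'n)"

definition sat_cut :: "'n cut \<Rightarrow> real^'n \<Rightarrow> real \<Rightarrow> bool" where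
  "sat_cut c x \<psi> \<longleftrightarrow> \<psi> \<le> fst c + (\<Sum>j\<in>UNIV. snd c $ j * x $ j)"

definition optimality_cut ::
  "'a measure \<Rightarrow> (real^'n \<Rightarrow> 'a \<Rightarrow> real) \<Rightarrow> real \<Rightarrow> (real^'n) set \<Rightarrow> 'n cut \<Rightarrow> bool" where
  "optimality_cut M \<sigma> \<alpha> X c \<longleftrightarrow> (\<forall>x\<in>X. sat_cut c x (cvar M \<alpha> (\<sigma> x)))"

definition cutA ::
  "'a measure \<Rightarrow> (real^'n \<Rightarrow> 'a \<Rightarrow> real) \<Rightarrow> real \<Rightarrow> real^'n \<Rightarrow> 'n cut" where
  "cutA M \<sigma> \<alpha> xb =
     (cvar M \<alpha> (\<sigma> xb),
      \<chi> j. if j \<notin> supp xb then cvar M 1 (\<sigma> (xb + unitv j)) - cvar M \<alpha> (\<sigma> xb) else 0)"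

text \<open>Cut (B) generated at xb for an ordering js = [j_1,...,j_r] of V - supp xb
  (0-based list indices: delta of js!i uses the elements js!l with i < l < r).\<close>
definition cutB ::
  "'a measure \<Rightarrow> (real^'n \<Rightarrow> 'a \<Rightarrow> real) \<Rightarrow> real \<Rightarrow> real^'n \<Rightarrow> 'n list \<Rightarrow> 'n cut" where
  "cutB M \<sigma> \<alpha> xb js =
     (cvar M \<alpha> (\<sigma> xb),
      \<chi> j. (\<Sum>i<length js. if js ! i = j then
               cvar M \<alpha> (\<sigma> (onesv - (\<Sum>l\<in>{Suc i..<length js}. unitv (js ! l))))
                 - cvar M \<alpha> (\<sigma> xb)
             else 0))"

definition ordering_of :: "'n list \<Rightarrow> 'n set \<Rightarrow> bool" where
  "ordering_of js A \<longleftrightarrow> distinct js \<and> set js = A"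

definition master_opt :: "(real^'n) set \<Rightarrow> 'n cut set \<Rightarrow> real^'n \<Rightarrow> real \<Rightarrow> bool" where
  "master_opt X C x \<psi> \<longleftrightarrow>
     (x \<in> X \<and> (\<forall>c\<in>C. sat_cut c x \<psi>)) \<and>
     (\<forall>x' \<psi>'. x' \<in> X \<and> (\<forall>c\<in>C. sat_cut c x' \<psi>') \<longrightarrow> \<psi>' \<le> \<psi>)"

text \<open>A (possibly infinite) run of the delayed constraint generation algorithm with
  tolerance 0: iteration k (k = 0,1,...) is executed iff UB - LB > 0 after all earlier
  iterations; in it, (psis k, xs k) is an optimal master solution for cut set Cs k,
  UB = psis k, LB = CVaR_alpha(sigma(xs k)), and cut (A) and/or cut (B) generated at
  xs k is added, giving Cs (Suc k).\<close>
definition dcg_run ::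
  "'a measure \<Rightarrow> (real^'n \<Rightarrow> 'a \<Rightarrow> real) \<Rightarrow> real \<Rightarrow> (real^'n) set \<Rightarrow> 'n cut set \<Rightarrow>
   (nat \<Rightarrow> real^'n) \<Rightarrow> (nat \<Rightarrow> real) \<Rightarrow> (nat \<Rightarrow> 'n cut set) \<Rightarrow> bool" where
  "dcg_run M \<sigma> \<alpha> X C0 xs psis Cs \<longleftrightarrow>
     Cs 0 = C0 \<and>
     (\<forall>k. (\<forall>i<k. psis i - cvar M \<alpha> (\<sigma> (xs i)) > 0) \<longrightarrow>
        master_opt X (Cs k) (xs k) (psis k) \<and>
        (Cs (Suc k) = Cs k \<union> {cutA M \<sigma> \<alpha> (xs k)} \<or>
         (\<exists>js. ordering_of js (UNIV - supp (xs k)) \<and>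
            (Cs (Suc k) = Cs k \<union> {cutB M \<sigma> \<alpha> (xs k) js} \<or>
             Cs (Suc k) = Cs k \<union> {cutA M \<sigma> \<alpha> (xs k), cutB M \<sigma> \<alpha> (xs k) js}))))"

end

theory Submission
  imports Defs
begin

text \<open>Both cuts are valid on all binary vectors. Cut (B) only needs monotonicity of
  S \<mapsto> CVaR_alpha(sigma(1_S)) along the chain of supersets 1 - sum_{l>i} e_{j_l} of the support
  of xb. Cut (A) combines CVaR_alpha \<le> E = CVaR_1 with submodularity of S \<mapsto> E sigma(1_S); the
  increments may be measured from CVaR_alpha(sigma(xb)) instead of E sigma(xb) because at least one
  increment is present whenever the support grows. Both cuts are tight at xb. Hence the master
  value is an upper bound on the optimum, and a revisited point meets its own tight cut, which
  forces UB \<le> LB. There are finitely many binary vectors, so the gap closes after finitely many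
  iterations, and then LB = CVaR_alpha(sigma(xb)) attains the upper bound.\<close>

context prob_space
begin

lemma integrable_shortfall:
  fixes Y :: "'a \<Rightarrow> real"
  assumes "integrable M Y"
  shows "integrable M (\<lambda>\<omega>. max (\<eta> - Y \<omega>) 0)"
  using assms by (intro integrable_max integrable_diff) auto

lemma cvar_objective_le_expectation:
  fixes Y :: "'a \<Rightarrow> real"
  assumes Y: "integrable M Y" and "0 < \<alpha>" "\<alpha> \<le> 1"
  shows "\<eta> - (1 / \<alpha>) * (\<integral>\<omega>. max (\<eta> - Y \<omega>) 0 \<partial>M) \<le> expectation Y"
proof -
  let ?E = "\<integral>\<omega>. max (\<eta> - Y \<omega>) 0 \<partial>M"
  have "\<eta> - expectation Y = (\<integral>\<omega>. \<eta> - Y \<omega> \<partial>M)"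
    using Y by (simp add: prob_space)
  also have "\<dots> \<le> ?E"
    using Y integrable_shortfall[OF Y] by (intro integral_mono) auto
  also have "\<dots> \<le> (1 / \<alpha>) * ?E"
    using assms(2,3) integral_nonneg_AE[of "\<lambda>\<omega>. max (\<eta> - Y \<omega>) 0" M]
    by (simp add: le_divide_eq mult_left_le)
  finally show ?thesis by simp
qed

lemma bdd_above_cvar_objective:
  fixes Y :: "'a \<Rightarrow> real"
  assumes "integrable M Y" "0 < \<alpha>" "\<alpha> \<le> 1"
  shows "bdd_above (range (\<lambda>\<eta>. \<eta> - (1 / \<alpha>) * (\<integral>\<omega>. max (\<eta> - Y \<omega>) 0 \<partial>M)))"
  using cvar_objective_le_expectation[OF assms] by (intro bdd_aboveI2)

lemma cvar_le_expectation:
  fixes Y :: "'a \<Rightarrow> real"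
  assumes "integrable M Y" "0 < \<alpha>" "\<alpha> \<le> 1"
  shows "cvar M \<alpha> Y \<le> expectation Y"
  unfolding cvar_def using cvar_objective_le_expectation[OF assms] by (intro cSUP_least) auto

lemma cvar_mono:
  fixes Y Z :: "'a \<Rightarrow> real"
  assumes Y: "integrable M Y" and Z: "integrable M Z" and \<alpha>: "0 < \<alpha>" "\<alpha> \<le> 1"
    and le: "\<And>\<omega>. \<omega> \<in> space M \<Longrightarrow> Y \<omega> \<le> Z \<omega>"
  shows "cvar M \<alpha> Y \<le> cvar M \<alpha> Z"
  unfolding cvar_def
proof (rule cSUP_mono)
  show "bdd_above (range (\<lambda>\<eta>. \<eta> - (1 / \<alpha>) * (\<integral>\<omega>. max (\<eta> - Z \<omega>) 0 \<partial>M)))"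
    using Z \<alpha> by (rule bdd_above_cvar_objective)
  fix \<eta> :: real
  have "(\<integral>\<omega>. max (\<eta> - Z \<omega>) 0 \<partial>M) \<le> (\<integral>\<omega>. max (\<eta> - Y \<omega>) 0 \<partial>M)"
    using le by (intro integral_mono integrable_shortfall Y Z) force+
  then show "\<exists>\<eta>'\<in>UNIV. \<eta> - 1 / \<alpha> * (\<integral>\<omega>. max (\<eta> - Y \<omega>) 0 \<partial>M)
                 \<le> \<eta>' - 1 / \<alpha> * (\<integral>\<omega>. max (\<eta>' - Z \<omega>) 0 \<partial>M)"
    using \<alpha> by (intro bexI[of _ \<eta>] diff_left_mono mult_left_mono) auto
qed auto

lemma cvar_1_eq_expectation:
  fixes Y :: "'a \<Rightarrow> real"
  assumes Y: "integrable M Y"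
  shows "cvar M 1 Y = expectation Y"
proof (rule antisym)
  show "cvar M 1 Y \<le> expectation Y"
    using Y by (rule cvar_le_expectation) auto
  have [measurable]: "Y \<in> borel_measurable M"
    using Y by auto
  have "(\<lambda>n. \<integral>\<omega>. min (Y \<omega>) (real n) \<partial>M) \<longlonglongrightarrow> expectation Y"
  proof (rule integral_dominated_convergence[where w="\<lambda>\<omega>. \<bar>Y \<omega>\<bar>"])
    show "AE \<omega> in M. (\<lambda>n. min (Y \<omega>) (real n)) \<longlonglongrightarrow> Y \<omega>"
    proof (rule AE_I2)
      fix \<omega>
      obtain N :: nat where "Y \<omega> \<le> real N"
        using real_arch_simple by blast
      then have "\<forall>n\<ge>N. min (Y \<omega>) (real n) = Y \<omega>"
        by (metis min.absorb1 of_nat_le_iff order_trans)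
      then show "(\<lambda>n. min (Y \<omega>) (real n)) \<longlonglongrightarrow> Y \<omega>"
        by (intro tendsto_eventually) (auto simp: eventually_sequentially)
    qed
  qed (use Y in auto)
  then show "expectation Y \<le> cvar M 1 Y"
  proof (rule LIMSEQ_le_const2, intro exI allI impI)
    fix n :: nat
    have "(\<integral>\<omega>. min (Y \<omega>) (real n) \<partial>M) = (\<integral>\<omega>. real n - max (real n - Y \<omega>) 0 \<partial>M)"
      by (intro Bochner_Integration.integral_cong) auto
    also have "\<dots> = real n - (\<integral>\<omega>. max (real n - Y \<omega>) 0 \<partial>M)"
      using integrable_shortfall[OF Y] by (simp add: prob_space)
    also have "\<dots> \<le> cvar M 1 Y"
      unfolding cvar_def using cSUP_upper[OF UNIV_I bdd_above_cvar_objective[OF Y, of 1]] by simp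
    finally show "(\<integral>\<omega>. min (Y \<omega>) (real n) \<partial>M) \<le> cvar M 1 Y" .
  qed
qed

end

lemma indvec_nth [simp]: "indvec S $ i = (if i \<in> S then 1 else 0)"
  by (simp add: indvec_def)

lemma unitv_nth [simp]: "unitv j $ i = (if i = j then 1 else 0)"
  by (simp add: unitv_def axis_def)

lemma indvec_in_binvecs: "indvec S \<in> binvecs"
  by (simp add: binvecs_def)

lemma indvec_supp: "x \<in> binvecs \<Longrightarrow> indvec (supp x) = x"
  by (auto simp: binvecs_def supp_def vec_eq_iff)

lemma finite_binvecs: "finite (binvecs :: (real^'n) set)"
proof (rule finite_subset)
  show "binvecs \<subseteq> range (indvec :: 'n set \<Rightarrow> real^'n)"
    using indvec_supp by (metis rangeI subsetI)
qed simp

lemma add_unitv_eq_indvec: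
  "x \<in> binvecs \<Longrightarrow> j \<notin> supp x \<Longrightarrow> x + unitv j = indvec (insert j (supp x))"
  by (auto simp: binvecs_def supp_def vec_eq_iff)

lemma sum_unitv_eq_indvec: "(\<Sum>j\<in>S. unitv j) = indvec S"
  by (simp add: vec_eq_iff)

lemma onesv_minus_indvec: "onesv - indvec S = indvec (- S)"
  by (simp add: vec_eq_iff onesv_def)

lemma onesv_minus_sum_unitv_nth:
  assumes "distinct js" "I \<subseteq> {..<length js}"
  shows "onesv - (\<Sum>l\<in>I. unitv (js ! l)) = indvec (- nth js ` I)"
proof -
  have "inj_on (nth js) I"
    using assms by (intro inj_on_nth) auto
  then show ?thesis
    by (simp add: sum.reindex[symmetric, unfolded comp_def] sum_unitv_eq_indvec onesv_minus_indvec)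
qed

lemma submodular_le_sum_increments:
  assumes f: "submodular_setfun f" and "finite J" "B \<inter> J = {}"
  shows "f (B \<union> J) \<le> f B + (\<Sum>j\<in>J. f (insert j B) - f B)"
  using assms(2,3)
proof (induction J rule: finite_induct)
  case (insert j J)
  have "f ((B \<union> J) \<union> insert j B) + f ((B \<union> J) \<inter> insert j B) \<le> f (B \<union> J) + f (insert j B)"
    using f unfolding submodular_setfun_def by blast
  moreover have "(B \<union> J) \<union> insert j B = B \<union> insert j J" and "(B \<union> J) \<inter> insert j B = B"
    using insert by auto
  ultimately show ?case
    using insert by simp
qed simp

lemma le_submodular_majorant_increments:
  fixes F E :: "'a::finite set \<Rightarrow> real"
  assumes F: "nondecr_setfun F" and E: "submodular_setfun E" and le: "\<And>S. F S \<le> E S"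
  shows "F S \<le> F B + (\<Sum>j\<in>S - B. E (insert j B) - F B)"
proof (cases "S \<subseteq> B")
  case True
  then show ?thesis
    using F by (simp add: nondecr_setfun_def Diff_eq_empty_iff[THEN iffD2, OF True])
next
  case False
  define J where "J = S - B"
  have "J \<noteq> {}"
    using False by (auto simp: J_def)
  then have card_J: "1 \<le> real (card J)"
    by (simp add: Suc_le_eq card_gt_0_iff)
  have "F S \<le> F (B \<union> J)"
    using F by (auto simp: nondecr_setfun_def J_def)
  also have "\<dots> \<le> E (B \<union> J)"
    by (rule le)
  also have "\<dots> \<le> E B + (\<Sum>j\<in>J. E (insert j B) - E B)"
    using E by (rule submodular_le_sum_increments) (auto simp: J_def)
  also have "\<dots> = E B - real (card J) * (E B - F B) + (\<Sum>j\<in>J. E (insert j B) - F B)"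
    by (simp add: sum_subtractf algebra_simps)
  also have "\<dots> \<le> F B + (\<Sum>j\<in>J. E (insert j B) - F B)"
    using mult_right_mono[OF card_J, of "E B - F B"] le[of B] by simp
  finally show ?thesis
    by (simp add: J_def)
qed

lemma nondecr_le_suffix_increments:
  fixes F :: "'a::finite set \<Rightarrow> real"
  assumes F: "nondecr_setfun F" and js: "distinct js" "set js = - B"
  defines "T i \<equiv> - nth js ` {Suc i..<length js}"
  shows "F S \<le> F B + (\<Sum>i<length js. (F (T i) - F B) * indvec S $ (js ! i))"
proof -
  have B_T: "B \<subseteq> T i" for i
    using js by (auto simp: T_def)
  have increments_nonneg: "0 \<le> (F (T i) - F B) * indvec S $ (js ! i)" for i
    using F B_T by (simp add: nondecr_setfun_def)
  define I where "I = {i. i < length js \<and> js ! i \<in> S}"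
  show ?thesis
  proof (cases "I = {}")
    case True
    then have "S \<subseteq> B"
      using js by (force simp: I_def in_set_conv_nth)
    then have "F S \<le> F B"
      using F by (simp add: nondecr_setfun_def)
    then show ?thesis
      using increments_nonneg by (simp add: sum_nonneg add_increasing2)
  next
    case False
    define i0 where "i0 = Max I"
    have "finite I"
      by (simp add: I_def)
    then have i0: "i0 \<in> I" and above_i0: "\<And>i. i \<in> I \<Longrightarrow> i \<le> i0"
      using False by (simp_all add: i0_def)
    have "S \<subseteq> T i0"
      using above_i0 by (fastforce simp: T_def I_def)
    then have "F S \<le> F (T i0)"
      using F by (simp add: nondecr_setfun_def)
    also have "\<dots> = F B + (F (T i0) - F B) * indvec S $ (js ! i0)"
      using i0 by (simp add: I_def)
    also have "\<dots> \<le> F B + (\<Sum>i<length js. (F (T i) - F B) * indvec S $ (js ! i))"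
      using i0 increments_nonneg by (intro add_left_mono member_le_sum) (auto simp: I_def)
    finally show ?thesis .
  qed
qed

definition cut_value :: "'n cut \<Rightarrow> real^'n \<Rightarrow> real" where
  "cut_value c x = fst c + (\<Sum>j\<in>UNIV. snd c $ j * x $ j)"

lemma sat_cut_iff_le_cut_value: "sat_cut c x \<psi> \<longleftrightarrow> \<psi> \<le> cut_value c x"
  by (simp add: sat_cut_def cut_value_def)

lemma cut_value_cutA:
  "cut_value (cutA M \<sigma> \<alpha> xb) x =
     cvar M \<alpha> (\<sigma> xb) + (\<Sum>j\<in>- supp xb. (cvar M 1 (\<sigma> (xb + unitv j)) - cvar M \<alpha> (\<sigma> xb)) * x $ j)"
  by (simp add: cut_value_def cutA_def if_distrib[of "\<lambda>t. t * _"] sum.If_cases Compl_eq)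

lemma cut_value_cutB:
  assumes "distinct js"
  shows "cut_value (cutB M \<sigma> \<alpha> xb js) x =
     cvar M \<alpha> (\<sigma> xb) + (\<Sum>i<length js.
       (cvar M \<alpha> (\<sigma> (indvec (- nth js ` {Suc i..<length js}))) - cvar M \<alpha> (\<sigma> xb)) * x $ (js ! i))"
proof -
  define \<delta> where
    "\<delta> i = cvar M \<alpha> (\<sigma> (onesv - (\<Sum>l\<in>{Suc i..<length js}. unitv (js ! l)))) - cvar M \<alpha> (\<sigma> xb)"
    for i
  have "(\<Sum>j\<in>UNIV. snd (cutB M \<sigma> \<alpha> xb js) $ j * x $ j) =
        (\<Sum>j\<in>UNIV. \<Sum>i<length js. if js ! i = j then \<delta> i * x $ j else 0)"
    by (simp add: cutB_def \<delta>_def sum_distrib_right if_distrib[of "\<lambda>t. t * _"] cong: if_cong)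
  also have "\<dots> = (\<Sum>i<length js. \<delta> i * x $ (js ! i))"
    by (subst sum.swap) simp
  moreover have
    "onesv - (\<Sum>l\<in>{Suc i..<length js}. unitv (js ! l)) = indvec (- nth js ` {Suc i..<length js})"
    for i
    using assms by (intro onesv_minus_sum_unitv_nth) auto
  ultimately show ?thesis
    by (simp add: cut_value_def cutB_def \<delta>_def)
qed

definition generated_cuts ::
  "'a measure \<Rightarrow> (real^'n \<Rightarrow> 'a \<Rightarrow> real) \<Rightarrow> real \<Rightarrow> real^'n \<Rightarrow> 'n cut set" where
  "generated_cuts M \<sigma> \<alpha> xb =
     insert (cutA M \<sigma> \<alpha> xb) (cutB M \<sigma> \<alpha> xb ` {js. ordering_of js (UNIV - supp xb)})"

lemma cut_value_generated_cut:
  assumes "c \<in> generated_cuts M \<sigma> \<alpha> xb"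
  shows "cut_value c xb = cvar M \<alpha> (\<sigma> xb)"
  using assms
proof (unfold generated_cuts_def, elim insertE imageE)
  assume "c = cutA M \<sigma> \<alpha> xb"
  then show ?thesis
    by (simp add: cut_value_cutA supp_def)
next
  fix js assume "c = cutB M \<sigma> \<alpha> xb js" and "js \<in> {js. ordering_of js (UNIV - supp xb)}"
  moreover have "xb $ (js ! i) = 0" if "ordering_of js (UNIV - supp xb)" "i < length js" for i
    using that nth_mem[of i js] by (auto simp: ordering_of_def supp_def)
  ultimately show ?thesis
    by (simp add: cut_value_cutB ordering_of_def)
qed

locale submodular_cvar =
  fixes M :: "'a measure" and \<sigma> :: "real^'n \<Rightarrow> 'a \<Rightarrow> real" and \<alpha> :: real
  assumes prob_space: "prob_space M"
    and nondecr: "\<And>\<omega>. \<omega> \<in> space M \<Longrightarrow> nondecr_setfun (\<lambda>S. \<sigma> (indvec S) \<omega>)"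
    and submodular: "\<And>\<omega>. \<omega> \<in> space M \<Longrightarrow> submodular_setfun (\<lambda>S. \<sigma> (indvec S) \<omega>)"
    and integrable: "\<And>x. x \<in> binvecs \<Longrightarrow> integrable M (\<sigma> x)"
    and alpha_pos: "0 < \<alpha>" and alpha_le_1: "\<alpha> \<le> 1"
begin

lemma integrable_indvec: "integrable M (\<sigma> (indvec S))"
  by (rule integrable[OF indvec_in_binvecs])

lemma nondecr_cvar_indvec: "nondecr_setfun (\<lambda>S. cvar M \<alpha> (\<sigma> (indvec S)))"
  using nondecr
  by (auto simp: nondecr_setfun_def intro!: prob_space.cvar_mono[OF prob_space]
      integrable_indvec alpha_pos alpha_le_1)

lemma submodular_expectation_indvec: "submodular_setfun (\<lambda>S. integral\<^sup>L M (\<sigma> (indvec S)))"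
  unfolding submodular_setfun_def
proof (intro allI)
  fix S T
  have "(\<integral>\<omega>. \<sigma> (indvec (S \<union> T)) \<omega> + \<sigma> (indvec (S \<inter> T)) \<omega> \<partial>M) \<le>
        (\<integral>\<omega>. \<sigma> (indvec S) \<omega> + \<sigma> (indvec T) \<omega> \<partial>M)"
    using submodular by (intro integral_mono) (auto simp: submodular_setfun_def integrable_indvec)
  then show "integral\<^sup>L M (\<sigma> (indvec (S \<union> T))) + integral\<^sup>L M (\<sigma> (indvec (S \<inter> T)))
      \<le> integral\<^sup>L M (\<sigma> (indvec S)) + integral\<^sup>L M (\<sigma> (indvec T))"
    by (simp add: integrable_indvec)
qed

lemma cutA_valid:
  assumes xb: "xb \<in> binvecs" and x: "x \<in> binvecs"
  shows "sat_cut (cutA M \<sigma> \<alpha> xb) x (cvar M \<alpha> (\<sigma> x))"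
proof -
  define F where "F S = cvar M \<alpha> (\<sigma> (indvec S))" for S
  define E where "E S = integral\<^sup>L M (\<sigma> (indvec S))" for S
  define B where "B = supp xb"
  define S where "S = supp x"
  have "cvar M \<alpha> (\<sigma> x) = F S"
    using x by (simp add: F_def S_def indvec_supp)
  also have "\<dots> \<le> F B + (\<Sum>j\<in>S - B. E (insert j B) - F B)"
    using nondecr_cvar_indvec submodular_expectation_indvec
      prob_space.cvar_le_expectation[OF prob_space integrable_indvec alpha_pos alpha_le_1]
    by (intro le_submodular_majorant_increments) (simp_all add: F_def E_def)
  also have "(\<Sum>j\<in>S - B. E (insert j B) - F B) =
      (\<Sum>j\<in>- B. (cvar M 1 (\<sigma> (xb + unitv j)) - F B) * x $ j)"
  proof -
    have "E (insert j B) = cvar M 1 (\<sigma> (xb + unitv j))" if "j \<notin> B" for j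
      using that xb prob_space.cvar_1_eq_expectation[OF prob_space integrable_indvec]
      by (simp add: E_def B_def add_unitv_eq_indvec)
    then have "(\<Sum>j\<in>- B. (cvar M 1 (\<sigma> (xb + unitv j)) - F B) * x $ j) =
        (\<Sum>j\<in>- B. if j \<in> S then E (insert j B) - F B else 0)"
      using x by (intro sum.cong) (auto simp: S_def supp_def binvecs_def)
    then show ?thesis
      by (simp add: sum.If_cases Diff_eq Int_commute)
  qed
  also have "F B + \<dots> = cut_value (cutA M \<sigma> \<alpha> xb) x"
    using xb by (simp add: cut_value_cutA F_def B_def indvec_supp)
  finally show ?thesis
    by (simp add: sat_cut_iff_le_cut_value)
qed

lemma cutB_valid:
  assumes xb: "xb \<in> binvecs" and x: "x \<in> binvecs" and js: "ordering_of js (UNIV - supp xb)"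
  shows "sat_cut (cutB M \<sigma> \<alpha> xb js) x (cvar M \<alpha> (\<sigma> x))"
proof -
  define F where "F S = cvar M \<alpha> (\<sigma> (indvec S))" for S
  have "distinct js" "set js = - supp xb"
    using js by (auto simp: ordering_of_def Compl_eq_Diff_UNIV)
  then have "F (supp x) \<le> F (supp xb) + (\<Sum>i<length js.
      (F (- nth js ` {Suc i..<length js}) - F (supp xb)) * indvec (supp x) $ (js ! i))"
    using nondecr_cvar_indvec by (intro nondecr_le_suffix_increments) (simp_all add: F_def)
  then show ?thesis
    using xb x \<open>distinct js\<close> by (simp add: sat_cut_iff_le_cut_value cut_value_cutB F_def indvec_supp)
qed

lemma generated_cut_valid:
  "c \<in> generated_cuts M \<sigma> \<alpha> xb \<Longrightarrow> xb \<in> binvecs \<Longrightarrow> x \<in> binvecs \<Longrightarrow>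
    sat_cut c x (cvar M \<alpha> (\<sigma> x))"
  unfolding generated_cuts_def using cutA_valid cutB_valid by blast

end

locale cutting_plane_run =
  fixes X :: "(real^'n) set" and f :: "real^'n \<Rightarrow> real" and G :: "real^'n \<Rightarrow> 'n cut set"
    and xs :: "nat \<Rightarrow> real^'n" and psis :: "nat \<Rightarrow> real" and Cs :: "nat \<Rightarrow> 'n cut set"
  assumes finite_X: "finite X"
    and initial_cuts_valid: "\<And>c x. c \<in> Cs 0 \<Longrightarrow> x \<in> X \<Longrightarrow> sat_cut c x (f x)"
    and new_cuts_valid: "\<And>xb c x. xb \<in> X \<Longrightarrow> c \<in> G xb \<Longrightarrow> x \<in> X \<Longrightarrow> sat_cut c x (f x)"
    and new_cuts_tight: "\<And>xb c. c \<in> G xb \<Longrightarrow> cut_value c xb \<le> f xb"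
    and iteration: "\<And>k. \<forall>i<k. psis i - f (xs i) > 0 \<Longrightarrow>
      master_opt X (Cs k) (xs k) (psis k) \<and> (\<exists>N. N \<noteq> {} \<and> N \<subseteq> G (xs k) \<and> Cs (Suc k) = Cs k \<union> N)"
begin

lemma iterate_in_X: "\<forall>i<k. psis i - f (xs i) > 0 \<Longrightarrow> xs k \<in> X"
  using iteration by (simp add: master_opt_def)

lemma cuts_valid: "\<forall>i<k. psis i - f (xs i) > 0 \<Longrightarrow> c \<in> Cs k \<Longrightarrow> x \<in> X \<Longrightarrow> sat_cut c x (f x)"
proof (induction k arbitrary: c)
  case 0
  then show ?case
    using initial_cuts_valid by blast
next
  case (Suc k)
  then have running: "\<forall>i<k. psis i - f (xs i) > 0"
    by simp
  from iteration[OF this] obtain N where "N \<subseteq> G (xs k)" "Cs (Suc k) = Cs k \<union> N"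
    by blast
  then consider "c \<in> Cs k" | "c \<in> G (xs k)"
    using Suc.prems(2) by blast
  then show ?case
  proof cases
    case 1
    then show ?thesis
      using Suc.IH running Suc.prems(3) by blast
  next
    case 2
    then show ?thesis
      using new_cuts_valid iterate_in_X[OF running] Suc.prems(3) by blast
  qed
qed

lemma optimum_le_master_value:
  assumes "\<forall>i<k. psis i - f (xs i) > 0" "x \<in> X"
  shows "f x \<le> psis k"
  using iteration[OF assms(1)] cuts_valid[OF assms(1) _ assms(2)] assms(2)
  unfolding master_opt_def by blast

lemma tight_cut_at_earlier_iterate:
  "\<forall>i<k. psis i - f (xs i) > 0 \<Longrightarrow> i < k \<Longrightarrow> \<exists>c\<in>Cs k. cut_value c (xs i) \<le> f (xs i)"
proof (induction k)
  case (Suc k)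
  then have running: "\<forall>i<k. psis i - f (xs i) > 0"
    by simp
  from iteration[OF this] obtain N where "N \<noteq> {}" "N \<subseteq> G (xs k)" "Cs (Suc k) = Cs k \<union> N"
    by blast
  show ?case
  proof (cases "i = k")
    case True
    obtain c where "c \<in> N"
      using \<open>N \<noteq> {}\<close> by blast
    then show ?thesis
      using True new_cuts_tight \<open>N \<subseteq> G (xs k)\<close> \<open>Cs (Suc k) = Cs k \<union> N\<close> by blast
  next
    case False
    then have "i < k"
      using Suc.prems(2) by simp
    then show ?thesis
      using Suc.IH running \<open>Cs (Suc k) = Cs k \<union> N\<close> by blast
  qed
qed simp

lemma master_value_at_revisit:
  assumes "\<forall>i<k. psis i - f (xs i) > 0" "i < k" "xs i = xs k"
  shows "psis k \<le> f (xs k)"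
proof -
  obtain c where "c \<in> Cs k" "cut_value c (xs k) \<le> f (xs k)"
    using tight_cut_at_earlier_iterate[OF assms(1,2)] unfolding assms(3) by blast
  moreover have "sat_cut c (xs k) (psis k)"
    using iteration[OF assms(1)] \<open>c \<in> Cs k\<close> by (simp add: master_opt_def)
  ultimately show ?thesis
    by (simp add: sat_cut_iff_le_cut_value)
qed

lemma terminates: "\<exists>k. \<not> psis k - f (xs k) > 0"
proof (rule ccontr)
  assume "\<nexists>k. \<not> psis k - f (xs k) > 0"
  then have running: "\<forall>i<k. psis i - f (xs i) > 0" for k
    by simp
  have "xs i \<noteq> xs k" if "i < k" for i k
  proof
    assume "xs i = xs k"
    then have "psis k \<le> f (xs k)"
      using master_value_at_revisit running that by blast
    moreover have "psis k - f (xs k) > 0"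
      using running[of "Suc k"] by simp
    ultimately show False
      by simp
  qed
  then have "inj xs"
    by (rule linorder_injI)
  moreover have "range xs \<subseteq> X"
    using iterate_in_X[OF running] by blast
  ultimately show False
    using finite_X range_inj_infinite finite_subset by blast
qed

theorem terminates_at_optimum:
  "\<exists>k. (\<forall>i<k. psis i - f (xs i) > 0) \<and> psis k - f (xs k) \<le> 0 \<and>
       xs k \<in> X \<and> (\<forall>x\<in>X. f x \<le> f (xs k))"
proof -
  define k where "k = (LEAST k. \<not> psis k - f (xs k) > 0)"
  have stop: "\<not> psis k - f (xs k) > 0"
    unfolding k_def using terminates by (rule LeastI_ex)
  have running: "\<forall>i<k. psis i - f (xs i) > 0"
    unfolding k_def using not_less_Least by blast
  have "f x \<le> f (xs k)" if "x \<in> X" for x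
    using optimum_le_master_value[OF running that] stop by simp
  then show ?thesis
    using stop running iterate_in_X[OF running] by (intro exI[of _ k]) simp
qed

end

lemma dcg_run_iteration:
  assumes "dcg_run M \<sigma> \<alpha> X C0 xs psis Cs" "\<forall>i<k. psis i - cvar M \<alpha> (\<sigma> (xs i)) > 0"
  shows "master_opt X (Cs k) (xs k) (psis k) \<and>
    (\<exists>N. N \<noteq> {} \<and> N \<subseteq> generated_cuts M \<sigma> \<alpha> (xs k) \<and> Cs (Suc k) = Cs k \<union> N)"
proof -
  have "master_opt X (Cs k) (xs k) (psis k)" and
    "Cs (Suc k) = Cs k \<union> {cutA M \<sigma> \<alpha> (xs k)} \<or>
     (\<exists>js. ordering_of js (UNIV - supp (xs k)) \<and>
        (Cs (Suc k) = Cs k \<union> {cutB M \<sigma> \<alpha> (xs k) js} \<or>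
         Cs (Suc k) = Cs k \<union> {cutA M \<sigma> \<alpha> (xs k), cutB M \<sigma> \<alpha> (xs k) js}))"
    using assms unfolding dcg_run_def by blast+
  moreover have "cutA M \<sigma> \<alpha> (xs k) \<in> generated_cuts M \<sigma> \<alpha> (xs k)"
    and "ordering_of js (UNIV - supp (xs k)) \<Longrightarrow> cutB M \<sigma> \<alpha> (xs k) js \<in> generated_cuts M \<sigma> \<alpha> (xs k)"
    for js
    by (simp_all add: generated_cuts_def)
  ultimately show ?thesis
    by (elim disjE exE conjE) (intro conjI exI[of _ "{_}"] exI[of _ "{_, _}"]; auto)+
qed

theorem proposition3:
  fixes M :: "'a measure" and \<sigma> :: "real^'n \<Rightarrow> 'a \<Rightarrow> real"
    and X :: "(real^'n) set" and \<alpha> :: real and C0 :: "'n cut set"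
    and xs :: "nat \<Rightarrow> real^'n" and psis :: "nat \<Rightarrow> real" and Cs :: "nat \<Rightarrow> 'n cut set"
  assumes "prob_space M"
    and "\<And>\<omega>. \<omega> \<in> space M \<Longrightarrow> nondecr_setfun (\<lambda>S. \<sigma> (indvec S) \<omega>)"
    and "\<And>\<omega>. \<omega> \<in> space M \<Longrightarrow> submodular_setfun (\<lambda>S. \<sigma> (indvec S) \<omega>)"
    and "\<And>x. x \<in> binvecs \<Longrightarrow> integrable M (\<sigma> x)"
    and "X \<subseteq> binvecs" and "X \<noteq> {}"
    and "0 < \<alpha>" and "\<alpha> \<le> 1"
    and "finite C0" and "\<forall>c\<in>C0. optimality_cut M \<sigma> \<alpha> X c"
    and "dcg_run M \<sigma> \<alpha> X C0 xs psis Cs"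
  shows "\<exists>k. (\<forall>i<k. psis i - cvar M \<alpha> (\<sigma> (xs i)) > 0) \<and>
             psis k - cvar M \<alpha> (\<sigma> (xs k)) \<le> 0 \<and>
             xs k \<in> X \<and> (\<forall>x\<in>X. cvar M \<alpha> (\<sigma> x) \<le> cvar M \<alpha> (\<sigma> (xs k)))"
proof -
  interpret submodular_cvar M \<sigma> \<alpha>
    using assms(1-4,7,8) by (simp add: submodular_cvar_def)
  interpret cutting_plane_run X "\<lambda>x. cvar M \<alpha> (\<sigma> x)" "generated_cuts M \<sigma> \<alpha>" xs psis Cs
  proof
    show "finite X"
      using finite_binvecs assms(5) by (rule rev_finite_subset)
    show "sat_cut c x (cvar M \<alpha> (\<sigma> x))" if "c \<in> Cs 0" "x \<in> X" for c x
      using assms(10,11) that by (simp add: dcg_run_def optimality_cut_def)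
    show "sat_cut c x (cvar M \<alpha> (\<sigma> x))" if "xb \<in> X" "c \<in> generated_cuts M \<sigma> \<alpha> xb" "x \<in> X"
      for xb c x
      using generated_cut_valid assms(5) that by blast
    show "cut_value c xb \<le> cvar M \<alpha> (\<sigma> xb)" if "c \<in> generated_cuts M \<sigma> \<alpha> xb" for c xb
      using cut_value_generated_cut[OF that] by simp
  qed (rule dcg_run_iteration[OF assms(11)])
  show ?thesis
    by (rule terminates_at_optimum)
qed

end
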